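(* Let $\Omega$ be as in the context and suppose $\Omega$ is nonempty and bounded, $0\notin\Omega$, and $\Omega\cap\mathcal{R}\neq\emptyset$. Consider $$\text{(P)}\quad \min\{\langle\overline{C},Y\rangle : Y\in\Omega\cap\mathcal{R}\}\qquad\text{and}\qquad \text{(P}_\rho)\quad \min\{\langle\overline{C},Y\rangle+\rho\operatorname{rank}(Y) : Y\in\Omega\}.$$ Then there exists $\overline{\rho}>0$ such that for every $\rho\ge\overline{\rho}$ the set of global optimal solutions of (P$_\rho$) coincides with the set of global optimal solutions of (P).
   Context: $\mathcal{S}^q$ is the space of real symmetric $q\times q$ matrices with trace inner product $\langle P,Q\rangle=\operatorname{tr}(PQ)$; $\mathcal{S}^q_+$ the positive semidefinite cone; $\mathcal{N}^q$ the entrywise nonnegative matrices in $\mathcal{S}^q$. Given $\overline{C}\in\mathcal{S}^q$, a linear map $\mathcal{A}:\mathcal{S}^q\to\mathbb{R}^m$ and $b\in\mathbb{R}^m$, set $\Omega:=\{Y\in\mathcal{S}^q_+\cap\mathcal{N}^q : \mathcal{A}(Y)=b\}$ and $\mathcal{R}:=\{Y\in\mathcal{S}^q:\operatorname{rank}(Y)\le1\}$. *)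

theory Defs
  imports "HOL-Analysis.Analysis"
begin

text \<open>Real q x q matrices are modelled as real^'q^'q (q = CARD('q)).\<close>

definition sym_mat :: "real^'q^'q \<Rightarrow> bool" where
  "sym_mat Y \<longleftrightarrow> transpose Y = Y"

definition psd_mat :: "real^'q^'q \<Rightarrow> bool" where
  "psd_mat Y \<longleftrightarrow> sym_mat Y \<and> (\<forall>x. 0 \<le> x \<bullet> (Y *v x))"

definition nonneg_mat :: "real^'q^'q \<Rightarrow> bool" where
  "nonneg_mat Y \<longleftrightarrow> (\<forall>i j. 0 \<le> Y $ i $ j)"

definition tr_inner :: "real^'q^'q \<Rightarrow> real^'q^'q \<Rightarrow> real" where
  "tr_inner P Q = trace (P ** Q)"

definition Omega_set :: "(real^'q^'q \<Rightarrow> real^'m) \<Rightarrow> real^'m \<Rightarrow> (real^'q^'q) set" where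
  "Omega_set Aop b = {Y. psd_mat Y \<and> nonneg_mat Y \<and> Aop Y = b}"

definition rank_le1_set :: "(real^'q^'q) set" where
  "rank_le1_set = {Y. sym_mat Y \<and> rank Y \<le> 1}"

definition global_opt_set :: "('a \<Rightarrow> real) \<Rightarrow> 'a set \<Rightarrow> 'a set" where
  "global_opt_set f S = {Y \<in> S. \<forall>Z\<in>S. f Y \<le> f Z}"

end

theory Submission
  imports Defs
begin

text \<open>Exact penalization of the rank: the objective is bounded on the bounded feasible set, and
  every matrix in \<open>\<Omega>\<close> has rank at least one, so once \<open>\<rho>\<close> exceeds the oscillation of the objective
  on \<open>\<Omega>\<close>, one extra unit of rank costs more than any gain in the objective. Hence the
  minimizers of the penalized problem lie on the rank-one level set, where the penalty is
  constant.\<close>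

lemma global_opt_set_exact_penalty:
  fixes f :: "'a \<Rightarrow> real" and r :: "'a \<Rightarrow> nat"
  assumes bound: "\<And>Y. Y \<in> S \<Longrightarrow> \<bar>f Y\<bar> \<le> M"
    and r_ge: "\<And>Y. Y \<in> S \<Longrightarrow> k \<le> r Y"
    and attained: "Z0 \<in> S" "r Z0 = k"
    and rho: "2 * M < rho"
  shows "global_opt_set (\<lambda>Y. f Y + rho * real (r Y)) S = global_opt_set f {Y \<in> S. r Y = k}"
proof -
  let ?g = "\<lambda>Y. f Y + rho * real (r Y)"
  have "0 \<le> M" using bound[OF attained(1)] by linarith
  with rho have "0 < rho" by linarith
  have off_level: "?g Z < ?g Y"
    if "Z \<in> S" "r Z = k" "Y \<in> S" "r Y \<noteq> k" for Y Z
  proof -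
    have "real k + 1 \<le> real (r Y)" using r_ge[OF that(3)] that(4) by simp
    hence "rho * real k + rho \<le> rho * real (r Y)"
      using \<open>0 < rho\<close> mult_left_mono[of "real k + 1" "real (r Y)" rho] by (simp add: algebra_simps)
    thus ?thesis using bound[OF that(1)] bound[OF that(3)] rho unfolding that(2) by linarith
  qed
  show ?thesis
  proof (intro equalityI subsetI)
    fix Y assume "Y \<in> global_opt_set ?g S"
    hence Y: "Y \<in> S" "\<And>Z. Z \<in> S \<Longrightarrow> ?g Y \<le> ?g Z" by (auto simp: global_opt_set_def)
    have "r Y = k" using off_level[OF attained Y(1)] Y(2)[OF attained(1)] by fastforce
    with Y show "Y \<in> global_opt_set f {Y \<in> S. r Y = k}"
      by (fastforce simp: global_opt_set_def)
  next
    fix Y assume "Y \<in> global_opt_set f {Y \<in> S. r Y = k}"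
    hence Y: "Y \<in> S" "r Y = k" "\<And>Z. Z \<in> S \<Longrightarrow> r Z = k \<Longrightarrow> f Y \<le> f Z"
      by (auto simp: global_opt_set_def)
    have "?g Y \<le> ?g Z" if "Z \<in> S" for Z
      using off_level[OF Y(1,2) that] Y(3)[OF that] Y(2) by (cases "r Z = k") auto
    with Y(1) show "Y \<in> global_opt_set ?g S" by (simp add: global_opt_set_def)
  qed
qed

lemma linear_tr_inner: "linear (tr_inner C)"
  by (rule linearI)
     (simp_all add: tr_inner_def trace_def matrix_matrix_mult_def sum_distrib_left
        sum.distrib algebra_simps)

lemma one_le_rank_if_mem_Omega_set:
  assumes "0 \<notin> Omega_set Aop b" and "Y \<in> Omega_set Aop b"
  shows "1 \<le> rank Y"
  using assms rank_eq_0[of Y] by (cases "Y = 0") auto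

lemma Omega_set_inter_rank_le1_set:
  assumes "0 \<notin> Omega_set Aop b"
  shows "Omega_set Aop b \<inter> rank_le1_set = {Y \<in> Omega_set Aop b. rank Y = 1}"
  using one_le_rank_if_mem_Omega_set[OF assms]
  by (fastforce simp: rank_le1_set_def Omega_set_def psd_mat_def)

theorem theorem4:
  fixes Cbar :: "real^'q^'q" and Aop :: "real^'q^'q \<Rightarrow> real^'m" and b :: "real^'m"
  assumes "sym_mat Cbar"
    and "linear Aop"
    and "Omega_set Aop b \<noteq> {}"
    and "bounded (Omega_set Aop b)"
    and "0 \<notin> Omega_set Aop b"
    and "Omega_set Aop b \<inter> rank_le1_set \<noteq> {}"
  shows "\<exists>rho_bar > 0. \<forall>rho \<ge> rho_bar.
           global_opt_set (\<lambda>Y. tr_inner Cbar Y + rho * real (rank Y)) (Omega_set Aop b)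
         = global_opt_set (\<lambda>Y. tr_inner Cbar Y) (Omega_set Aop b \<inter> rank_le1_set)"
proof -
  let ?O = "Omega_set Aop b"
  have level: "?O \<inter> rank_le1_set = {Y \<in> ?O. rank Y = 1}"
    using assms(5) by (rule Omega_set_inter_rank_le1_set)
  have "bounded (tr_inner Cbar ` ?O)"
    using assms(4) linear_tr_inner linear_conv_bounded_linear bounded_linear_image by blast
  then obtain M where M: "\<And>Y. Y \<in> ?O \<Longrightarrow> \<bar>tr_inner Cbar Y\<bar> \<le> M"
    unfolding bounded_iff by fastforce
  obtain Z0 where Z0: "Z0 \<in> ?O" "rank Z0 = 1" using assms(6) level by blast
  note rank_ge = one_le_rank_if_mem_Omega_set[OF assms(5)]
  have "0 < 2 * M + 1" using M[OF Z0(1)] by linarith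
  moreover have "global_opt_set (\<lambda>Y. tr_inner Cbar Y + rho * real (rank Y)) ?O
      = global_opt_set (tr_inner Cbar) (?O \<inter> rank_le1_set)" if "2 * M + 1 \<le> rho" for rho
  proof -
    have "2 * M < rho" using that by linarith
    from global_opt_set_exact_penalty[where f = "tr_inner Cbar" and r = rank, OF M rank_ge Z0 this]
    show ?thesis unfolding level .
  qed
  ultimately show ?thesis by blast
qed

end
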